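(* For $n\in\mathbb{N}^\star$ let $\phi_n(x)=\int_0^\pi e^{-2x\sin\eta}e^{2in\eta}\,\mathrm{d}\eta$ and define $\varphi_n(x)=n\,\phi_n(nx)$ for $x>0$. Define functions $\Psi_k$ on $(0,\infty)$ by $$\Psi_0(x)=\frac{x}{1+x^2},\qquad \Psi_{k+1}(x)=\frac{x^2}{4(1+x^2)}\Big(\Psi_k''(x)+\frac1x\Psi_k'(x)\Big),\quad k\in\mathbb{N}.$$ For $n\ge1$ and $N\in\mathbb{N}$ define $g_{n,N}$ by $\varphi_n(x)=\sum_{k=0}^N n^{-2k}\Psi_k(x)+g_{n,N}(x)$, $x>0$. Then for every $N\in\mathbb{N}$ and $\delta\in[0,\tfrac13)$ there is a constant $C=C(N,\delta)>0$, independent of $n$ and $x$, such that $$|g_{n,N}(x)|\le\frac{C}{n^{2N+\frac23-\delta}}\,\frac{x^\delta}{1+x}\qquad\text{for all }x>0,\ n\ge1.$$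
   Context: $\mathbb{N}=\{0,1,2,\dots\}$, $\mathbb{N}^\star=\{1,2,\dots\}$. *)

theory Defs
  imports "HOL-Analysis.Analysis"
begin

definition phi :: "nat \<Rightarrow> real \<Rightarrow> complex" where
  "phi n x = integral {0..pi}
     (\<lambda>\<eta>. exp (complex_of_real (- 2 * x * sin \<eta>)) * exp (\<i> * complex_of_real (2 * real n * \<eta>)))"

definition varphi :: "nat \<Rightarrow> real \<Rightarrow> complex" where
  "varphi n x = of_nat n * phi n (real n * x)"

text \<open>Psi_k; only values at x > 0 are meaningful (derivatives there depend only on values near x).\<close>
fun Psi :: "nat \<Rightarrow> real \<Rightarrow> real" where
  "Psi 0 x = x / (1 + x\<^sup>2)"
| "Psi (Suc k) x = x\<^sup>2 / (4 * (1 + x\<^sup>2)) * (deriv (deriv (Psi k)) x + deriv (Psi k) x / x)"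

definition g :: "nat \<Rightarrow> nat \<Rightarrow> real \<Rightarrow> complex" where
  "g n N x = varphi n x - complex_of_real (\<Sum>k=0..N. real n powr (- 2 * real k) * Psi k x)"

end

theory Submission
  imports Defs
begin

(* Integrating the t-derivative of (2x cos t + 2in) e^(-2x sin t) e^(2int) shows that varphi_n
   solves the modified Bessel equation
     x^2 v'' + x v' - 4 n^2 (1 + x^2) v = -4 n^2 x.
   The Psi_k are its formal solution in powers of n^(-2): by their recursion the partial sum
   S_N = sum_(k<=N) n^(-2k) Psi_k solves it up to the defect 4 (1 + x^2) n^(-2N) Psi_(N+1).
   Each Psi_k is a finite sum of terms c x^a / (1 + x^2)^b with 1 <= a < 2b, so this defect is
   O(n^(-2N) x). The remainder g_(n,N) = varphi_n - S_N vanishes at 0 and is bounded, and a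
   maximum principle comparing it with C x / (1 + x^2) + eps e^x gives
   |g_(n,N)(x)| <= C n^(-2N-2) x / (1 + x^2). This is stronger than the claim, because
   x / (1 + x^2) <= 2 x^delta / (1 + x) for 0 <= delta <= 1. *)

section \<open>The functions Psi_k\<close>

(* A list of triples (c, a, b) stands for the sum of the terms c x^a / (1 + x^2)^b;
   euler_terms implements x d/dx and scale_terms the division by 4 (1 + x^2). *)
type_synonym rat_terms = "(real \<times> nat \<times> nat) list"

definition eval_terms :: "rat_terms \<Rightarrow> real \<Rightarrow> real" where
  "eval_terms cs x = (\<Sum>(c, a, b)\<leftarrow>cs. c * x ^ a / (1 + x\<^sup>2) ^ b)"

definition deriv_terms :: "rat_terms \<Rightarrow> rat_terms" where
  "deriv_terms cs = concat (map (\<lambda>(c, a, b). [(c * real a, a - 1, b), (- 2 * real b * c, a + 1, b + 1)]) cs)"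

definition euler_terms :: "rat_terms \<Rightarrow> rat_terms" where
  "euler_terms cs = concat (map (\<lambda>(c, a, b). [(c * real a, a, b), (- 2 * real b * c, a + 2, b + 1)]) cs)"

definition scale_terms :: "rat_terms \<Rightarrow> rat_terms" where
  "scale_terms cs = map (\<lambda>(c, a, b). (c / 4, a, b + 1)) cs"

lemma eval_terms_Nil [simp]: "eval_terms [] x = 0"
  by (simp add: eval_terms_def)

lemma eval_terms_Cons [simp]: "eval_terms ((c, a, b) # cs) x = c * x ^ a / (1 + x\<^sup>2) ^ b + eval_terms cs x"
  by (simp add: eval_terms_def)

lemma eval_terms_append [simp]: "eval_terms (cs @ ds) x = eval_terms cs x + eval_terms ds x"
  by (simp add: eval_terms_def)

lemma one_plus_square_pos: "0 < 1 + (x::real)\<^sup>2"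
  by (simp add: add_pos_nonneg)

lemma two_mult_le_one_plus_square: "2 * x \<le> 1 + (x::real)\<^sup>2"
  using zero_le_power2[of "x - 1"] by (simp add: power2_eq_square algebra_simps)

lemma rat_term_has_real_derivative:
  "((\<lambda>x. c * x ^ a / (1 + x\<^sup>2) ^ b) has_real_derivative
     c * real a * x ^ (a - 1) / (1 + x\<^sup>2) ^ b + (- 2 * real b * c) * x ^ (a + 1) / (1 + x\<^sup>2) ^ (b + 1)) (at x)"
proof -
  let ?w = "1 + x\<^sup>2"
  have "((\<lambda>x. c * x ^ a / (1 + x\<^sup>2) ^ b) has_real_derivative
      (c * (real a * x ^ (a - 1)) * ?w ^ b - c * x ^ a * (real b * ?w ^ (b - 1) * (2 * x))) / (?w ^ b * ?w ^ b)) (at x)"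
    using one_plus_square_pos[of x] by (auto intro!: derivative_eq_intros)
  also have "(c * (real a * x ^ (a - 1)) * ?w ^ b - c * x ^ a * (real b * ?w ^ (b - 1) * (2 * x))) / (?w ^ b * ?w ^ b)
      = c * real a * x ^ (a - 1) / ?w ^ b + (- 2 * real b * c) * x ^ (a + 1) / ?w ^ (b + 1)"
  proof (cases b)
    case (Suc b')
    obtain w where w: "w = 1 + x\<^sup>2" "w > 0" using one_plus_square_pos by blast
    show ?thesis unfolding w(1)[symmetric] using Suc w(2) by (simp add: field_simps)
  qed simp
  finally show ?thesis .
qed

lemma eval_terms_has_real_derivative: "(eval_terms cs has_real_derivative eval_terms (deriv_terms cs) x) (at x)"
proof (induction cs)
  case (Cons t cs)
  obtain c a b where t: "t = (c, a, b)" by (cases t)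
  have f: "eval_terms (t # cs) = (\<lambda>x. c * x ^ a / (1 + x\<^sup>2) ^ b + eval_terms cs x)"
    using t by (simp add: fun_eq_iff)
  have f': "eval_terms (deriv_terms (t # cs)) x = (c * real a * x ^ (a - 1) / (1 + x\<^sup>2) ^ b
      + (- 2 * real b * c) * x ^ (a + 1) / (1 + x\<^sup>2) ^ (b + 1)) + eval_terms (deriv_terms cs) x"
    using t by (simp add: deriv_terms_def)
  show ?case unfolding f f' by (rule DERIV_add[OF rat_term_has_real_derivative Cons.IH])
qed (simp add: deriv_terms_def)

lemma deriv_eval_terms: "deriv (eval_terms cs) = eval_terms (deriv_terms cs)"
  using eval_terms_has_real_derivative DERIV_imp_deriv by blast

lemma eval_euler_terms: "eval_terms (euler_terms cs) x = x * eval_terms (deriv_terms cs) x"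
proof (induction cs)
  case (Cons t cs)
  obtain c a b where t: "t = (c, a, b)" by (cases t)
  have "eval_terms (euler_terms (t # cs)) x = c * real a * x ^ a / (1 + x\<^sup>2) ^ b
      + (- 2 * real b * c) * x ^ (a + 2) / (1 + x\<^sup>2) ^ (b + 1) + eval_terms (euler_terms cs) x"
    using t by (simp add: euler_terms_def)
  also have "\<dots> = x * (c * real a * x ^ (a - 1) / (1 + x\<^sup>2) ^ b)
      + x * ((- 2 * real b * c) * x ^ (a + 1) / (1 + x\<^sup>2) ^ (b + 1)) + x * eval_terms (deriv_terms cs) x"
    unfolding Cons.IH by (cases a) (simp_all add: mult_ac)
  also have "\<dots> = x * eval_terms (deriv_terms (t # cs)) x"
    using t by (simp add: deriv_terms_def algebra_simps)
  finally show ?case .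
qed (simp add: euler_terms_def deriv_terms_def)

lemma eval_scale_terms: "eval_terms (scale_terms cs) x = eval_terms cs x / (4 * (1 + x\<^sup>2))"
proof (induction cs)
  case (Cons t cs)
  obtain c a b where "t = (c, a, b)" by (cases t)
  with Cons.IH one_plus_square_pos[of x] show ?case
    by (simp add: scale_terms_def add_divide_distrib)
qed (simp add: scale_terms_def)

lemma eval_deriv_euler_terms:
  "eval_terms (deriv_terms (euler_terms cs)) x = eval_terms (deriv_terms cs) x + x * eval_terms (deriv_terms (deriv_terms cs)) x"
proof -
  have "(eval_terms (euler_terms cs) has_real_derivative
      eval_terms (deriv_terms cs) x + x * eval_terms (deriv_terms (deriv_terms cs)) x) (at x)"
    using DERIV_mult[OF DERIV_ident eval_terms_has_real_derivative[of "deriv_terms cs"]]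
    by (simp add: eval_euler_terms[abs_def] mult.commute)
  then show ?thesis using DERIV_unique eval_terms_has_real_derivative by blast
qed

lemma eval_scale_euler_euler_terms:
  "4 * (1 + x\<^sup>2) * eval_terms (scale_terms (euler_terms (euler_terms cs))) x
     = x\<^sup>2 * eval_terms (deriv_terms (deriv_terms cs)) x + x * eval_terms (deriv_terms cs) x"
  using one_plus_square_pos[of x]
  by (simp add: eval_scale_terms eval_euler_terms eval_deriv_euler_terms field_simps power2_eq_square)

fun Psi_terms :: "nat \<Rightarrow> rat_terms" where
  "Psi_terms 0 = [(1, 1, 1)]"
| "Psi_terms (Suc k) = scale_terms (euler_terms (euler_terms (Psi_terms k)))"

lemma Psi_eq_eval_terms: "Psi k = eval_terms (Psi_terms k)"
proof (induction k)
  case (Suc k)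
  show ?case
  proof
    fix x :: real
    note rec = eval_scale_euler_euler_terms[of x "Psi_terms k"]
    show "Psi (Suc k) x = eval_terms (Psi_terms (Suc k)) x"
    proof (cases "x = 0")
      case False
      have "Psi (Suc k) x = (x\<^sup>2 * eval_terms (deriv_terms (deriv_terms (Psi_terms k))) x
          + x * eval_terms (deriv_terms (Psi_terms k)) x) / (4 * (1 + x\<^sup>2))"
        using False by (simp add: Suc.IH deriv_eval_terms distrib_left add_divide_distrib power2_eq_square)
      also have "\<dots> = eval_terms (Psi_terms (Suc k)) x"
        unfolding rec[symmetric] using one_plus_square_pos[of x] by simp
      finally show ?thesis .
    qed (use rec in simp)
  qed
qed (simp add: fun_eq_iff)

lemma funpow_deriv_Psi_has_real_derivative:
  "((deriv ^^ j) (Psi k) has_real_derivative (deriv ^^ Suc j) (Psi k) x) (at x)"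
proof -
  have "(deriv ^^ j) (Psi k) = eval_terms ((deriv_terms ^^ j) (Psi_terms k))" for j
    by (induction j) (simp_all add: Psi_eq_eval_terms deriv_eval_terms)
  then show ?thesis
    by (simp add: eval_terms_has_real_derivative deriv_eval_terms)
qed

lemma Psi_has_real_derivative: "(Psi k has_real_derivative deriv (Psi k) x) (at x)"
  using funpow_deriv_Psi_has_real_derivative[of 0] by simp

lemma deriv_Psi_has_real_derivative: "(deriv (Psi k) has_real_derivative deriv (deriv (Psi k)) x) (at x)"
  using funpow_deriv_Psi_has_real_derivative[of 1] by simp

lemma Psi_recurrence:
  "x\<^sup>2 * deriv (deriv (Psi k)) x + x * deriv (Psi k) x = 4 * (1 + x\<^sup>2) * Psi (Suc k) x"
  unfolding Psi_eq_eval_terms deriv_eval_terms Psi_terms.simps eval_scale_euler_euler_terms ..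

lemma Psi_zero: "Psi k 0 = 0"
  by (cases k) simp_all

declare Psi.simps(2) [simp del]

definition admissible_terms :: "rat_terms \<Rightarrow> bool" where
  "admissible_terms cs \<longleftrightarrow> (\<forall>(c, a, b)\<in>set cs. 1 \<le> a \<and> a + 1 \<le> 2 * b)"

lemma admissible_Psi_terms: "admissible_terms (Psi_terms k)"
  by (induction k) (auto simp: admissible_terms_def scale_terms_def euler_terms_def)

definition coeff_norm :: "rat_terms \<Rightarrow> real" where
  "coeff_norm cs = (\<Sum>(c, a, b)\<leftarrow>cs. \<bar>c\<bar>)"

lemma coeff_norm_nonneg: "0 \<le> coeff_norm cs"
  unfolding coeff_norm_def by (induction cs) auto

lemma power_div_one_plus_square_le:
  fixes x :: real
  assumes "1 \<le> a" "a + 1 \<le> 2 * b" "0 \<le> x"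
  shows "x ^ a / (1 + x\<^sup>2) ^ b \<le> x / (1 + x\<^sup>2)"
proof -
  obtain a' b' where ab: "a = Suc a'" "b = Suc b'" "a' \<le> 2 * b'"
    using assms by (cases a; cases b) auto
  have "x ^ a' \<le> max 1 x ^ (2 * b')"
    by (rule order.trans[OF power_mono power_increasing]) (use assms ab in auto)
  also have "\<dots> = (max 1 x)\<^sup>2 ^ b'"
    by (simp add: power_mult)
  also have "\<dots> \<le> (1 + x\<^sup>2) ^ b'"
    by (intro power_mono) (auto simp: max_def)
  finally have "x ^ a' / (1 + x\<^sup>2) ^ b' \<le> 1"
    using one_plus_square_pos[of x] by simp
  have "x ^ a / (1 + x\<^sup>2) ^ b = x / (1 + x\<^sup>2) * (x ^ a' / (1 + x\<^sup>2) ^ b')"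
    unfolding ab by simp
  also have "\<dots> \<le> x / (1 + x\<^sup>2) * 1"
    by (rule mult_left_mono) (use \<open>_ \<le> 1\<close> assms(3) in auto)
  finally show ?thesis
    by simp
qed

lemma abs_eval_terms_le:
  assumes "admissible_terms cs" "0 \<le> x"
  shows "\<bar>eval_terms cs x\<bar> \<le> coeff_norm cs * (x / (1 + x\<^sup>2))"
  using assms(1)
proof (induction cs)
  case (Cons t cs)
  obtain c a b where t: "t = (c, a, b)" by (cases t)
  with Cons.prems have adm: "1 \<le> a" "a + 1 \<le> 2 * b" "admissible_terms cs"
    by (auto simp: admissible_terms_def)
  have "\<bar>c * x ^ a / (1 + x\<^sup>2) ^ b\<bar> = \<bar>c\<bar> * (x ^ a / (1 + x\<^sup>2) ^ b)"
    using assms(2) by (simp add: abs_mult)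
  also have "\<dots> \<le> \<bar>c\<bar> * (x / (1 + x\<^sup>2))"
    by (rule mult_left_mono[OF power_div_one_plus_square_le[OF adm(1,2) assms(2)]]) simp
  finally have "\<bar>c * x ^ a / (1 + x\<^sup>2) ^ b\<bar> \<le> \<bar>c\<bar> * (x / (1 + x\<^sup>2))" .
  moreover have "eval_terms (t # cs) x = c * x ^ a / (1 + x\<^sup>2) ^ b + eval_terms cs x"
    "coeff_norm (t # cs) = \<bar>c\<bar> + coeff_norm cs"
    using t by (simp_all add: coeff_norm_def)
  ultimately show ?case
    using Cons.IH[OF adm(3)] abs_triangle_ineq[of "c * x ^ a / (1 + x\<^sup>2) ^ b" "eval_terms cs x"]
    by (simp only: distrib_right)
qed (simp add: coeff_norm_def)

lemma Psi_bound: "\<exists>A\<ge>0. \<forall>x\<ge>0. \<bar>Psi k x\<bar> \<le> A * (x / (1 + x\<^sup>2))"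
  using abs_eval_terms_le[OF admissible_Psi_terms] coeff_norm_nonneg
  unfolding Psi_eq_eval_terms by blast

lemma Psi_bounded: "\<exists>B. \<forall>x\<ge>0. \<bar>Psi k x\<bar> \<le> B"
proof -
  obtain A where A: "0 \<le> A" "\<And>x. 0 \<le> x \<Longrightarrow> \<bar>Psi k x\<bar> \<le> A * (x / (1 + x\<^sup>2))"
    using Psi_bound by blast
  have "x / (1 + x\<^sup>2) \<le> 1" if "0 \<le> x" for x :: real
  proof -
    have "x \<le> 1 + x\<^sup>2"
      using two_mult_le_one_plus_square[of x] that by linarith
    then show ?thesis
      by (simp add: add_pos_nonneg)
  qed
  then have "\<bar>Psi k x\<bar> \<le> A" if "0 \<le> x" for x
    using A mult_left_le[of "x / (1 + x\<^sup>2)" A] that by (meson order.trans)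
  then show ?thesis
    by blast
qed

lemma Psi_1: "Psi 1 x = x * (x ^ 4 - 6 * x\<^sup>2 + 1) / (4 * (1 + x\<^sup>2) ^ 4)"
proof -
  obtain w where w: "w = 1 + x\<^sup>2" "w > 0"
    using one_plus_square_pos by blast
  have "Psi_terms 1 = [(1/4, 1, 2), (-1/2, 3, 3), (-3/2, 3, 3), (2, 5, 4)]"
    by (simp add: scale_terms_def euler_terms_def)
  then have "Psi 1 x = eval_terms [(1/4, 1, 2), (-1/2, 3, 3), (-3/2, 3, 3), (2, 5, 4)] x"
    by (simp only: Psi_eq_eval_terms)
  also have "\<dots> = (x * w\<^sup>2 - 8 * x ^ 3 * w + 8 * x ^ 5) / (4 * w ^ 4)"
    unfolding eval_terms_Cons eval_terms_Nil w(1)[symmetric] using w(2)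
    by (simp add: field_simps eval_nat_numeral)
  also have "x * w\<^sup>2 - 8 * x ^ 3 * w + 8 * x ^ 5 = x * (x ^ 4 - 6 * x\<^sup>2 + 1)"
    unfolding w(1) by (simp add: algebra_simps eval_nat_numeral)
  finally show ?thesis
    unfolding w(1) .
qed

lemma Psi_1_le: "0 \<le> x \<Longrightarrow> 4 * (1 + x\<^sup>2) * Psi 1 x \<le> x"
proof -
  assume x: "0 \<le> x"
  have "(1 + x\<^sup>2) ^ 3 - (x ^ 4 - 6 * x\<^sup>2 + 1) = 9 * x\<^sup>2 + 2 * x ^ 4 + x ^ 6"
    by (simp add: algebra_simps eval_nat_numeral)
  moreover have "0 \<le> 9 * x\<^sup>2 + 2 * x ^ 4 + x ^ 6"
    using x by simp
  ultimately have "x ^ 4 - 6 * x\<^sup>2 + 1 \<le> (1 + x\<^sup>2) ^ 3"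
    by linarith
  then have "x * (x ^ 4 - 6 * x\<^sup>2 + 1) \<le> x * (1 + x\<^sup>2) ^ 3"
    using x by (rule mult_left_mono)
  moreover have "4 * (1 + x\<^sup>2) * Psi 1 x = x * (x ^ 4 - 6 * x\<^sup>2 + 1) / (1 + x\<^sup>2) ^ 3"
  proof -
    have "0 < w \<Longrightarrow> 4 * w * (y / (4 * w ^ 4)) = y / w ^ 3" for w y :: real
      by (simp add: field_simps eval_nat_numeral)
    then show ?thesis
      unfolding Psi_1 using one_plus_square_pos by blast
  qed
  ultimately show ?thesis
    using one_plus_square_pos[of x] by (simp add: divide_le_eq)
qed

section \<open>The differential equations of phi_n and varphi_n\<close>

definition phi_kernel :: "nat \<Rightarrow> real \<Rightarrow> real \<Rightarrow> complex" where
  "phi_kernel n x t = exp (complex_of_real (- 2 * x * sin t)) * exp (\<i> * complex_of_real (2 * real n * t))"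

definition phi_deriv :: "nat \<Rightarrow> nat \<Rightarrow> real \<Rightarrow> complex" where
  "phi_deriv n j x = integral {0..pi} (\<lambda>t. complex_of_real ((- 2 * sin t) ^ j) * phi_kernel n x t)"

lemma phi_eq_phi_deriv_0: "phi n = phi_deriv n 0"
  by (simp add: fun_eq_iff phi_def phi_deriv_def phi_kernel_def)

lemma phi_kernel_eq: "phi_kernel n x t = complex_of_real (exp (- 2 * x * sin t)) * exp (\<i> * complex_of_real (2 * real n * t))"
  by (simp add: phi_kernel_def flip: exp_of_real)

lemma phi_kernel_0 [simp]: "phi_kernel n x 0 = 1"
  by (simp add: phi_kernel_def)

lemma phi_kernel_pi [simp]: "phi_kernel n x pi = 1"
proof -
  have "exp (\<i> * complex_of_real (2 * real n * pi)) = exp (\<i> * (of_nat n * (of_real pi * 2)))"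
    by (simp add: mult_ac)
  also have "\<dots> = 1"
    by (rule exp_2pi_1_nat)
  finally show ?thesis
    unfolding phi_kernel_def by simp
qed

lemma phi_kernel_has_vector_derivative_x:
  "((\<lambda>x. phi_kernel n x t) has_vector_derivative complex_of_real (- 2 * sin t) * phi_kernel n x t) (at x within S)"
  unfolding phi_kernel_eq
  by (auto intro!: derivative_eq_intros simp: mult_ac)

lemma phi_kernel_has_vector_derivative_t:
  "((\<lambda>t. phi_kernel n x t) has_vector_derivative
     (complex_of_real (- 2 * x * cos t) + \<i> * complex_of_real (2 * real n)) * phi_kernel n x t) (at t within S)"
proof -
  have "((\<lambda>t. exp (\<i> * complex_of_real (2 * real n * t))) has_vector_derivative
      \<i> * complex_of_real (2 * real n) * exp (\<i> * complex_of_real (2 * real n * t))) (at t within S)"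
    using has_vector_derivative_at_within[OF exp_scaleR_has_vector_derivative_left,
        of "\<i> * complex_of_real (2 * real n)" t S]
    by (simp add: scaleR_conv_of_real mult_ac)
  then show ?thesis
    unfolding phi_kernel_eq by (auto intro!: derivative_eq_intros simp: algebra_simps)
qed

lemma continuous_on_phi_integrand:
  "continuous_on S (\<lambda>(x, t). complex_of_real ((- 2 * sin t) ^ j) * phi_kernel n x t)"
  unfolding phi_kernel_def split_beta by (intro continuous_intros)

lemma phi_integrand_has_integral:
  "((\<lambda>t. complex_of_real ((- 2 * sin t) ^ j) * phi_kernel n x t) has_integral phi_deriv n j x) {0..pi}"
  unfolding phi_deriv_def
  by (intro integrable_integral integrable_continuous_interval) (unfold phi_kernel_def, intro continuous_intros)

lemma phi_deriv_has_vector_derivative: "(phi_deriv n j has_vector_derivative phi_deriv n (Suc j) x) (at x)"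
proof -
  have "((\<lambda>x. integral (cbox 0 pi) (\<lambda>t. complex_of_real ((- 2 * sin t) ^ j) * phi_kernel n x t))
      has_vector_derivative integral (cbox 0 pi) (\<lambda>t. complex_of_real ((- 2 * sin t) ^ Suc j) * phi_kernel n x t))
      (at x within UNIV)"
  proof (rule leibniz_rule_vector_derivative)
    show "((\<lambda>x. complex_of_real ((- 2 * sin t) ^ j) * phi_kernel n x t) has_vector_derivative
        complex_of_real ((- 2 * sin t) ^ Suc j) * phi_kernel n x t) (at x within UNIV)" for x t
      using has_vector_derivative_mult_right[OF phi_kernel_has_vector_derivative_x,
          of "complex_of_real ((- 2 * sin t) ^ j)"]
      by (simp add: mult_ac)
    show "(\<lambda>t. complex_of_real ((- 2 * sin t) ^ j) * phi_kernel n x t) integrable_on cbox 0 pi" for x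
      using phi_integrand_has_integral by (auto simp: cbox_interval)
    show "continuous_on (UNIV \<times> cbox 0 pi) (\<lambda>(x, t). complex_of_real ((- 2 * sin t) ^ Suc j) * phi_kernel n x t)"
      by (rule continuous_on_phi_integrand)
  qed auto
  then show ?thesis
    unfolding cbox_interval by (simp only: phi_deriv_def[abs_def])
qed

lemma phi_deriv_ode:
  "complex_of_real (x\<^sup>2) * phi_deriv n 2 x + complex_of_real x * phi_deriv n 1 x
     - complex_of_real (4 * (x\<^sup>2 + (real n)\<^sup>2)) * phi_deriv n 0 x = complex_of_real (- 4 * x)"
proof -
  define s where "s j t = complex_of_real ((- 2 * sin t) ^ j)" for j t
  (* The t-derivative of G is the integrand D of the left-hand side, and G pi - G 0 = -4x. *)
  define G where "G t = (complex_of_real (2 * x * cos t) + \<i> * complex_of_real (2 * real n)) * phi_kernel n x t" for t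
  define D where "D t = complex_of_real (x\<^sup>2) * (s 2 t * phi_kernel n x t) + complex_of_real x * (s 1 t * phi_kernel n x t)
      - complex_of_real (4 * (x\<^sup>2 + (real n)\<^sup>2)) * (s 0 t * phi_kernel n x t)" for t
  have bracket: "complex_of_real (- 2 * x * sin t) + (complex_of_real (2 * x * cos t) + \<i> * complex_of_real (2 * real n))
      * (complex_of_real (- 2 * x * cos t) + \<i> * complex_of_real (2 * real n))
      = complex_of_real (x\<^sup>2) * s 2 t + complex_of_real x * s 1 t - complex_of_real (4 * (x\<^sup>2 + (real n)\<^sup>2)) * s 0 t" for t
  proof -
    have "x * (x * 4) = x * (x * (cos t * (cos t * 4))) + x * (x * (sin t * (sin t * 4)))"
      using sin_cos_squared_add3[of t] by algebra
    then show ?thesis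
      by (simp add: s_def complex_eq_iff power2_eq_square algebra_simps)
  qed
  have "(G has_vector_derivative (complex_of_real (- 2 * x * sin t) + (complex_of_real (2 * x * cos t)
      + \<i> * complex_of_real (2 * real n)) * (complex_of_real (- 2 * x * cos t) + \<i> * complex_of_real (2 * real n)))
      * phi_kernel n x t) (at t within {0..pi})" for t
    unfolding G_def
    by (auto intro!: derivative_eq_intros phi_kernel_has_vector_derivative_t simp: algebra_simps)
  then have "(G has_vector_derivative D t) (at t within {0..pi})" for t
    unfolding bracket D_def by (simp add: algebra_simps)
  then have "(D has_integral G pi - G 0) {0..pi}"
    by (intro fundamental_theorem_of_calculus) auto
  moreover have "G pi - G 0 = complex_of_real (- 4 * x)"
    by (simp add: G_def)
  moreover have "(D has_integral complex_of_real (x\<^sup>2) * phi_deriv n 2 x + complex_of_real x * phi_deriv n 1 x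
      - complex_of_real (4 * (x\<^sup>2 + (real n)\<^sup>2)) * phi_deriv n 0 x) {0..pi}"
    unfolding D_def s_def by (intro has_integral_diff has_integral_add has_integral_mult_right phi_integrand_has_integral)
  ultimately show ?thesis
    using has_integral_unique by metis
qed

lemma phi_kernel_has_integral: "(phi_kernel n x has_integral phi n x) {0..pi}"
  using phi_integrand_has_integral[of 0 n x] by (simp add: phi_eq_phi_deriv_0)

lemma phi_zero: "1 \<le> n \<Longrightarrow> phi n 0 = 0"
proof -
  assume "1 \<le> n"
  define c where "c = \<i> * complex_of_real (2 * real n)"
  have "c \<noteq> 0"
    using \<open>1 \<le> n\<close> by (simp add: c_def)
  have "((\<lambda>t. phi_kernel n 0 t / c) has_vector_derivative c * phi_kernel n 0 t / c) (at t within {0..pi})" for t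
    using has_vector_derivative_divide[OF phi_kernel_has_vector_derivative_t[of n 0 t "{0..pi}"], of c]
    by (simp add: c_def)
  then have "(phi_kernel n 0 has_integral phi_kernel n 0 pi / c - phi_kernel n 0 0 / c) {0..pi}"
    using \<open>c \<noteq> 0\<close> by (intro fundamental_theorem_of_calculus) auto
  then show ?thesis
    using has_integral_unique[OF phi_kernel_has_integral] by simp
qed

lemma norm_phi_le: "0 \<le> x \<Longrightarrow> cmod (phi n x) \<le> pi"
proof -
  assume x: "0 \<le> x"
  have "cmod (phi_kernel n x t) \<le> 1" if "t \<in> cbox 0 pi" for t
  proof -
    have "0 \<le> sin t"
      using that by (intro sin_ge_zero) auto
    then show ?thesis
      using x by (simp add: phi_kernel_eq norm_mult mult_nonneg_nonneg)
  qed
  then show ?thesis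
    using has_integral_bound[of 1, OF _ phi_kernel_has_integral[unfolded cbox_interval[symmetric]]] by simp
qed

definition varphi_deriv :: "nat \<Rightarrow> nat \<Rightarrow> real \<Rightarrow> complex" where
  "varphi_deriv n j x = of_nat n ^ Suc j * phi_deriv n j (real n * x)"

lemma varphi_eq_varphi_deriv_0: "varphi n = varphi_deriv n 0"
  by (simp add: fun_eq_iff varphi_def varphi_deriv_def phi_eq_phi_deriv_0)

lemma varphi_deriv_has_vector_derivative: "(varphi_deriv n j has_vector_derivative varphi_deriv n (Suc j) x) (at x)"
proof -
  have "((\<lambda>x. real n * x) has_vector_derivative real n) (at x)"
    using has_vector_derivative_mult_right[OF has_vector_derivative_id, of "real n"] by simp
  from vector_diff_chain_at[OF this phi_deriv_has_vector_derivative]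
  have "((\<lambda>x. phi_deriv n j (real n * x)) has_vector_derivative real n *\<^sub>R phi_deriv n (Suc j) (real n * x)) (at x)"
    by (simp add: comp_def)
  from has_vector_derivative_mult_right[OF this, of "of_nat n ^ Suc j"] show ?thesis
    unfolding varphi_deriv_def[abs_def] by (simp add: scaleR_conv_of_real mult_ac)
qed

lemma varphi_ode:
  "complex_of_real (x\<^sup>2) * varphi_deriv n 2 x + complex_of_real x * varphi_deriv n 1 x
     - complex_of_real (4 * (real n)\<^sup>2 * (1 + x\<^sup>2)) * varphi_deriv n 0 x = complex_of_real (- 4 * (real n)\<^sup>2 * x)"
proof -
  have "complex_of_real (x\<^sup>2) * varphi_deriv n 2 x + complex_of_real x * varphi_deriv n 1 x
      - complex_of_real (4 * (real n)\<^sup>2 * (1 + x\<^sup>2)) * varphi_deriv n 0 x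
    = of_nat n * (complex_of_real ((real n * x)\<^sup>2) * phi_deriv n 2 (real n * x)
      + complex_of_real (real n * x) * phi_deriv n 1 (real n * x)
      - complex_of_real (4 * ((real n * x)\<^sup>2 + (real n)\<^sup>2)) * phi_deriv n 0 (real n * x))"
    unfolding varphi_deriv_def by (simp add: algebra_simps power2_eq_square numeral_2_eq_2)
  also have "\<dots> = complex_of_real (- 4 * (real n)\<^sup>2 * x)"
    unfolding phi_deriv_ode by (simp add: power2_eq_square)
  finally show ?thesis .
qed

lemma varphi_zero: "1 \<le> n \<Longrightarrow> varphi n 0 = 0"
  by (simp add: varphi_def phi_zero)

lemma norm_varphi_le: "0 \<le> x \<Longrightarrow> cmod (varphi n x) \<le> real n * pi"
  by (simp add: varphi_def norm_mult norm_phi_le mult_left_mono)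

section \<open>A maximum principle for the Bessel operator\<close>

lemma exists_greater_right_of_critical_point:
  fixes u u' :: "real \<Rightarrow> real"
  assumes u: "\<And>y. (u has_real_derivative u' y) (at y)"
    and crit: "u' p = 0" and u': "(u' has_real_derivative l) (at p)" "0 < l"
    and d: "0 < d"
  shows "\<exists>y. p < y \<and> y < p + d \<and> u p < u y"
proof -
  obtain e where e: "0 < e" "\<And>h. 0 < h \<Longrightarrow> h < e \<Longrightarrow> u' p < u' (p + h)"
    using DERIV_pos_inc_right[OF u'] by blast
  define y where "y = p + min d e / 2"
  have "p < y" "y < p + d"
    using d e(1) by (auto simp: y_def)
  moreover have "u p < u y"
  proof (rule DERIV_pos_imp_increasing_open[OF \<open>p < y\<close>])
    fix z assume "p < z" "z < y"
    then have "0 < u' z"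
      using e(2)[of "z - p"] crit by (simp add: y_def)
    then show "\<exists>l. (u has_real_derivative l) (at z) \<and> 0 < l"
      using u by blast
  qed (use u in \<open>blast intro: DERIV_atLeastAtMost_imp_continuous_on\<close>)
  ultimately show ?thesis
    by blast
qed

lemma halfline_maximum_principle:
  fixes u u' u'' :: "real \<Rightarrow> real"
  assumes u: "\<And>x. (u has_real_derivative u' x) (at x)"
    and u': "\<And>x. (u' has_real_derivative u'' x) (at x)"
    and at_0: "\<forall>\<^sub>F x in at_right 0. u x < 0"
    and at_infinity: "\<forall>\<^sub>F x in at_top. u x < 0"
    and convex: "\<And>x. 0 < x \<Longrightarrow> 0 < u x \<Longrightarrow> u' x = 0 \<Longrightarrow> 0 < u'' x"
    and "0 < y"
  shows "u y \<le> 0"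
proof (rule ccontr)
  assume "\<not> u y \<le> 0"
  have "\<forall>\<^sub>F x in at_right 0. u x < 0 \<and> x \<in> {0<..<y}"
    using at_0 eventually_at_right_real[OF \<open>0 < y\<close>] by (rule eventually_conj)
  then obtain a where a: "0 < a" "a < y" "u a < 0"
    using eventually_happens'[OF trivial_limit_at_right_real] by auto
  have "\<forall>\<^sub>F x in at_top. u x < 0 \<and> y < x"
    using at_infinity eventually_gt_at_top by (rule eventually_conj)
  then obtain b where b: "y < b" "u b < 0"
    using eventually_happens'[OF trivial_limit_at_top_linorder] by auto
  have "continuous_on {a..b} u"
    using u by (blast intro: DERIV_atLeastAtMost_imp_continuous_on)
  then obtain p where p: "p \<in> {a..b}" "\<And>z. z \<in> {a..b} \<Longrightarrow> u z \<le> u p"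
    using continuous_attains_sup[OF compact_Icc] a b by (metis atLeastAtMost_iff atLeastatMost_empty_iff2 empty_iff less_le_not_le)
  have "0 < u p"
    using p(2)[of y] a b \<open>\<not> u y \<le> 0\<close> by auto
  then have "a < p" "p < b"
    using p(1) a b by (auto simp: order.order_iff_strict)
  have "u' p = 0"
  proof (rule DERIV_local_max[OF u])
    show "0 < min (p - a) (b - p)"
      using \<open>a < p\<close> \<open>p < b\<close> by simp
    show "\<forall>z. \<bar>p - z\<bar> < min (p - a) (b - p) \<longrightarrow> u z \<le> u p"
      using p(2) by (auto simp: abs_if)
  qed
  then obtain z where "p < z" "z < b" "u p < u z"
    using exists_greater_right_of_critical_point[OF u _ u' convex, of p "b - p"] \<open>a < p\<close> \<open>p < b\<close> \<open>0 < u p\<close> a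
    by auto
  then show False
    using p(2)[of z] \<open>a < p\<close> by auto
qed

(* With L v = x^2 v'' + x v' - 4 m (1 + x^2) v, the recursion gives
   L (c Psi_0) = 4 c (1 + x^2) Psi_1 - 4 m c x <= - (4 m - 1) c x <= - K x  for K = 3 m c,
   while L (eps e^x) > 0. *)
lemma comparison_convex_at_critical_point:
  fixes m c \<epsilon> x v0 v1 v2 :: real
  assumes m: "1 \<le> m" and c: "0 \<le> c" and x: "0 < x" and \<epsilon>: "0 < \<epsilon>"
    and Lv: "- (3 * m * c) * x \<le> x\<^sup>2 * v2 + x * v1 - 4 * m * (1 + x\<^sup>2) * v0"
    and pos: "0 < v0 - c * Psi 0 x - \<epsilon> * exp x"
    and crit: "v1 - c * deriv (Psi 0) x - \<epsilon> * exp x = 0"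
  shows "0 < v2 - c * deriv (deriv (Psi 0)) x - \<epsilon> * exp x"
proof -
  define P where "P = 4 * m * (1 + x\<^sup>2)"
  define u0 where "u0 = v0 - c * Psi 0 x - \<epsilon> * exp x"
  define u2 where "u2 = v2 - c * deriv (deriv (Psi 0)) x - \<epsilon> * exp x"
  define Lv where "Lv = x\<^sup>2 * v2 + x * v1 - P * v0"
  define LB where "LB = x\<^sup>2 * deriv (deriv (Psi 0)) x + x * deriv (Psi 0) x"
  have "x\<^sup>2 * u2 = x\<^sup>2 * u2 + x * (v1 - c * deriv (Psi 0) x - \<epsilon> * exp x)"
    using crit by simp
  also have "\<dots> = Lv + P * v0 - c * LB - \<epsilon> * exp x * (x\<^sup>2 + x)"
    by (simp add: u2_def Lv_def LB_def algebra_simps)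
  also have "P * v0 = P * u0 + c * (P * Psi 0 x) + \<epsilon> * exp x * P"
    by (simp add: u0_def algebra_simps)
  also have "P * Psi 0 x = 4 * m * x"
    using one_plus_square_pos[of x] by (simp add: P_def)
  finally have u2: "x\<^sup>2 * u2 = Lv + P * u0 + c * (4 * m * x) - c * LB + \<epsilon> * exp x * (P - (x\<^sup>2 + x))"
    by (simp add: algebra_simps)
  have "- (3 * m * c) * x \<le> Lv"
    using Lv by (simp add: Lv_def P_def)
  moreover have "c * LB \<le> c * x"
    unfolding LB_def Psi_recurrence using Psi_1_le[of x] x c by (intro mult_left_mono) auto
  moreover have "0 \<le> - (3 * m * c) * x + c * (4 * m * x) - c * x"
  proof -
    have "c * (1 * x) \<le> c * (m * x)"
      using m x c by (intro mult_left_mono mult_right_mono) auto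
    then show ?thesis
      by (simp add: algebra_simps)
  qed
  moreover have "0 < P * u0"
    using m pos one_plus_square_pos[of x] by (simp add: P_def u0_def)
  moreover have "x\<^sup>2 + x < P"
  proof -
    have "x\<^sup>2 + x < 4 * (1 + x\<^sup>2)"
      using two_mult_le_one_plus_square[of x] zero_le_power2[of x] unfolding distrib_left by linarith
    also have "\<dots> \<le> P"
      unfolding P_def using m one_plus_square_pos[of x] by (intro mult_right_mono) auto
    finally show ?thesis .
  qed
  then have "0 < \<epsilon> * exp x * (P - (x\<^sup>2 + x))"
    using \<epsilon> by simp
  ultimately have "0 < x\<^sup>2 * u2"
    unfolding u2 by linarith
  then show ?thesis
    by (simp add: u2_def zero_less_mult_iff)
qed

(* In the variable 2 sqrt(m) x the operator is the modified Bessel operator of order 2 sqrt(m).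
   The term eps e^x makes v - c Psi_0 - eps e^x negative at infinity. *)
lemma bessel_comparison_upper:
  fixes v v' v'' :: "real \<Rightarrow> real"
  assumes m: "1 \<le> m" and K: "0 \<le> K"
    and v: "\<And>x. (v has_real_derivative v' x) (at x)"
    and v': "\<And>x. (v' has_real_derivative v'' x) (at x)"
    and v0: "v 0 = 0"
    and bounded: "\<And>x. 0 < x \<Longrightarrow> v x \<le> M"
    and Lv: "\<And>x. 0 < x \<Longrightarrow> - K * x \<le> x\<^sup>2 * v'' x + x * v' x - 4 * m * (1 + x\<^sup>2) * v x"
    and "0 < y"
  shows "v y \<le> K / (3 * m) * Psi 0 y"
proof (rule ccontr)
  define c where "c = K / (3 * m)"
  have "0 \<le> c" "K = 3 * m * c"
    using m K by (simp_all add: c_def)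
  assume "\<not> v y \<le> K / (3 * m) * Psi 0 y"
  then have "c * Psi 0 y < v y"
    by (simp add: c_def)
  define \<epsilon> where "\<epsilon> = (v y - c * Psi 0 y) / (2 * exp y)"
  have "0 < \<epsilon>"
    using \<open>c * Psi 0 y < v y\<close> by (simp add: \<epsilon>_def)
  define u where "u x = v x - c * Psi 0 x - \<epsilon> * exp x" for x
  define u' where "u' x = v' x - c * deriv (Psi 0) x - \<epsilon> * exp x" for x
  define u'' where "u'' x = v'' x - c * deriv (deriv (Psi 0)) x - \<epsilon> * exp x" for x
  have u: "(u has_real_derivative u' x) (at x)" for x
    unfolding u_def u'_def by (intro DERIV_diff DERIV_cmult v Psi_has_real_derivative DERIV_exp)
  have du': "(u' has_real_derivative u'' x) (at x)" for x
    unfolding u'_def u''_def by (intro DERIV_diff DERIV_cmult v' deriv_Psi_has_real_derivative DERIV_exp)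
  have "u y \<le> 0"
  proof (rule halfline_maximum_principle[OF u du'])
    have "(u \<longlongrightarrow> u 0) (at_right 0)"
      using DERIV_isCont[OF u] by (simp add: isCont_def filterlim_at_split)
    moreover have "u 0 < 0"
      using v0 \<open>0 < \<epsilon>\<close> by (simp add: u_def Psi_zero)
    ultimately show "\<forall>\<^sub>F x in at_right 0. u x < 0"
      by (rule order_tendstoD(2))
    have "\<forall>\<^sub>F x in at_top. M / \<epsilon> < exp x"
      using exp_at_top by (simp add: filterlim_at_top_dense)
    then have "\<forall>\<^sub>F x in at_top. M / \<epsilon> < exp x \<and> 0 < x"
      using eventually_gt_at_top by (rule eventually_conj)
    then show "\<forall>\<^sub>F x in at_top. u x < 0"
    proof (rule eventually_mono)
      fix x assume x: "M / \<epsilon> < exp x \<and> 0 < x"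
      then have "M < \<epsilon> * exp x"
        using \<open>0 < \<epsilon>\<close> by (simp add: pos_divide_less_eq mult.commute)
      moreover have "0 \<le> c * Psi 0 x"
        using x \<open>0 \<le> c\<close> one_plus_square_pos[of x] by simp
      ultimately show "u x < 0"
        unfolding u_def using bounded[of x] x by linarith
    qed
  next
    fix x assume "0 < x" "0 < u x" "u' x = 0"
    with Lv[of x] show "0 < u'' x"
      unfolding u_def u'_def u''_def \<open>K = 3 * m * c\<close>
      by (intro comparison_convex_at_critical_point[OF m \<open>0 \<le> c\<close> _ \<open>0 < \<epsilon>\<close>]) auto
  qed fact
  then have "v y - c * Psi 0 y \<le> \<epsilon> * exp y"
    by (simp add: u_def)
  also have "\<dots> = (v y - c * Psi 0 y) / 2"
    by (simp add: \<epsilon>_def)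
  finally show False
    using \<open>c * Psi 0 y < v y\<close> by simp
qed

lemma bessel_comparison:
  fixes v v' v'' :: "real \<Rightarrow> real"
  assumes m: "1 \<le> m" and K: "0 \<le> K"
    and v: "\<And>x. (v has_real_derivative v' x) (at x)"
    and v': "\<And>x. (v' has_real_derivative v'' x) (at x)"
    and v0: "v 0 = 0"
    and bounded: "\<And>x. 0 < x \<Longrightarrow> \<bar>v x\<bar> \<le> M"
    and Lv: "\<And>x. 0 < x \<Longrightarrow> \<bar>x\<^sup>2 * v'' x + x * v' x - 4 * m * (1 + x\<^sup>2) * v x\<bar> \<le> K * x"
    and "0 < y"
  shows "\<bar>v y\<bar> \<le> K / (3 * m) * Psi 0 y"
proof -
  have "v y \<le> K / (3 * m) * Psi 0 y"
    using m K v v' v0 _ _ \<open>0 < y\<close>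
  proof (rule bessel_comparison_upper)
    show "v x \<le> M" "- K * x \<le> x\<^sup>2 * v'' x + x * v' x - 4 * m * (1 + x\<^sup>2) * v x" if "0 < x" for x
      using bounded[OF that] Lv[OF that] by auto
  qed
  moreover have "- v y \<le> K / (3 * m) * Psi 0 y"
    using m K _ _ _ _ _ \<open>0 < y\<close>
  proof (rule bessel_comparison_upper)
    show "((\<lambda>x. - v x) has_real_derivative - v' x) (at x)"
      "((\<lambda>x. - v' x) has_real_derivative - v'' x) (at x)" for x
      using v v' by (auto intro: DERIV_minus)
    show "- v x \<le> M" "- K * x \<le> x\<^sup>2 * - v'' x + x * - v' x - 4 * m * (1 + x\<^sup>2) * - v x" if "0 < x" for x
      using bounded[OF that] Lv[OF that] by auto
  qed (simp add: v0)
  ultimately show ?thesis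
    by linarith
qed

lemma bessel_comparison_complex:
  fixes v v' v'' :: "real \<Rightarrow> complex"
  assumes m: "1 \<le> m" and K: "0 \<le> K"
    and v: "\<And>x. (v has_vector_derivative v' x) (at x)"
    and v': "\<And>x. (v' has_vector_derivative v'' x) (at x)"
    and v0: "v 0 = 0"
    and bounded: "\<And>x. 0 < x \<Longrightarrow> cmod (v x) \<le> M"
    and Lv: "\<And>x. 0 < x \<Longrightarrow>
      cmod (complex_of_real (x\<^sup>2) * v'' x + complex_of_real x * v' x - complex_of_real (4 * m * (1 + x\<^sup>2)) * v x) \<le> K * x"
    and "0 < y"
  shows "cmod (v y) \<le> 2 * K / (3 * m) * Psi 0 y"
proof -
  have "\<bar>Re (v y)\<bar> \<le> K / (3 * m) * Psi 0 y"
    using m K _ _ _ _ _ \<open>0 < y\<close>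
  proof (rule bessel_comparison)
    show "((\<lambda>x. Re (v x)) has_real_derivative Re (v' x)) (at x)"
      "((\<lambda>x. Re (v' x)) has_real_derivative Re (v'' x)) (at x)" for x
      using v v' by (auto intro: has_field_derivative_Re)
    show "\<bar>Re (v x)\<bar> \<le> M" "\<bar>x\<^sup>2 * Re (v'' x) + x * Re (v' x) - 4 * m * (1 + x\<^sup>2) * Re (v x)\<bar> \<le> K * x"
      if "0 < x" for x
      using abs_Re_le_cmod order.trans bounded[OF that] Lv[OF that] by fastforce+
  qed (simp add: v0)
  moreover have "\<bar>Im (v y)\<bar> \<le> K / (3 * m) * Psi 0 y"
    using m K _ _ _ _ _ \<open>0 < y\<close>
  proof (rule bessel_comparison)
    show "((\<lambda>x. Im (v x)) has_real_derivative Im (v' x)) (at x)"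
      "((\<lambda>x. Im (v' x)) has_real_derivative Im (v'' x)) (at x)" for x
      using v v' by (auto intro: has_field_derivative_Im)
    show "\<bar>Im (v x)\<bar> \<le> M" "\<bar>x\<^sup>2 * Im (v'' x) + x * Im (v' x) - 4 * m * (1 + x\<^sup>2) * Im (v x)\<bar> \<le> K * x"
      if "0 < x" for x
      using abs_Im_le_cmod order.trans bounded[OF that] Lv[OF that] by fastforce+
  qed (simp add: v0)
  ultimately show ?thesis
    using cmod_le[of "v y"] by simp
qed

section \<open>The remainder estimate\<close>

definition Psi_sum :: "real \<Rightarrow> nat \<Rightarrow> nat \<Rightarrow> real \<Rightarrow> real" where
  "Psi_sum r N j x = (\<Sum>k=0..N. r powr (- 2 * real k) * (deriv ^^ j) (Psi k) x)"

lemma Psi_sum_has_real_derivative: "(Psi_sum r N j has_real_derivative Psi_sum r N (Suc j) x) (at x)"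
  unfolding Psi_sum_def[abs_def]
  by (intro DERIV_sum DERIV_cmult funpow_deriv_Psi_has_real_derivative)

lemma Psi_sum_bounded: "\<exists>M. \<forall>x\<ge>0. \<bar>Psi_sum r N 0 x\<bar> \<le> M"
proof (induction N)
  case 0
  then show ?case
    using Psi_bounded[of 0] by (simp add: Psi_sum_def)
next
  case (Suc N)
  obtain M B where M: "\<And>x. 0 \<le> x \<Longrightarrow> \<bar>Psi_sum r N 0 x\<bar> \<le> M"
    and B: "\<And>x. 0 \<le> x \<Longrightarrow> \<bar>Psi (Suc N) x\<bar> \<le> B"
    using Suc.IH Psi_bounded by metis
  have "\<bar>Psi_sum r (Suc N) 0 x\<bar> \<le> M + r powr (- 2 * real (Suc N)) * B" if "0 \<le> x" for x
  proof -
    have "\<bar>r powr (- 2 * real (Suc N)) * Psi (Suc N) x\<bar> \<le> r powr (- 2 * real (Suc N)) * B"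
      using B[OF that] by (simp add: abs_mult mult_left_mono)
    moreover have "Psi_sum r (Suc N) 0 x = Psi_sum r N 0 x + r powr (- 2 * real (Suc N)) * Psi (Suc N) x"
      by (simp add: Psi_sum_def)
    ultimately show ?thesis
      using M[OF that] abs_triangle_ineq[of "Psi_sum r N 0 x"] by linarith
  qed
  then show ?case
    by blast
qed

lemma sum_powr_telescope:
  fixes r :: real
  assumes "0 < r"
  shows "(\<Sum>k=0..N. r powr (- 2 * real k) * (f (Suc k) - r\<^sup>2 * f k))
     = r powr (- 2 * real N) * f (Suc N) - r\<^sup>2 * f 0"
proof (induction N)
  case (Suc N)
  have "r powr (- 2 * real (Suc N)) * r\<^sup>2 = r powr (- 2 * real (Suc N)) * r powr 2"
    using assms by (simp add: powr_numeral)
  also have "\<dots> = r powr (- 2 * real (Suc N) + 2)"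
    by (simp only: powr_add)
  also have "\<dots> = r powr (- 2 * real N)"
    by simp
  finally have "r powr (- 2 * real (Suc N)) * r\<^sup>2 = r powr (- 2 * real N)" .
  with Suc.IH show ?case
    by (simp add: algebra_simps)
qed simp

lemma Psi_sum_ode:
  assumes "0 < r"
  shows "x\<^sup>2 * Psi_sum r N 2 x + x * Psi_sum r N 1 x - 4 * r\<^sup>2 * (1 + x\<^sup>2) * Psi_sum r N 0 x
     = 4 * (1 + x\<^sup>2) * (r powr (- 2 * real N) * Psi (Suc N) x) - 4 * r\<^sup>2 * x"
proof -
  have "x\<^sup>2 * (r powr (- 2 * real k) * (deriv ^^ 2) (Psi k) x) + x * (r powr (- 2 * real k) * (deriv ^^ 1) (Psi k) x)
      - 4 * r\<^sup>2 * (1 + x\<^sup>2) * (r powr (- 2 * real k) * (deriv ^^ 0) (Psi k) x)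
    = 4 * (1 + x\<^sup>2) * (r powr (- 2 * real k) * (Psi (Suc k) x - r\<^sup>2 * Psi k x))" for k
  proof -
    have "x\<^sup>2 * (r powr (- 2 * real k) * (deriv ^^ 2) (Psi k) x) + x * (r powr (- 2 * real k) * (deriv ^^ 1) (Psi k) x)
        - 4 * r\<^sup>2 * (1 + x\<^sup>2) * (r powr (- 2 * real k) * (deriv ^^ 0) (Psi k) x)
      = r powr (- 2 * real k) * ((x\<^sup>2 * deriv (deriv (Psi k)) x + x * deriv (Psi k) x) - 4 * r\<^sup>2 * (1 + x\<^sup>2) * Psi k x)"
      by (simp add: numeral_2_eq_2 algebra_simps)
    also have "\<dots> = 4 * (1 + x\<^sup>2) * (r powr (- 2 * real k) * (Psi (Suc k) x - r\<^sup>2 * Psi k x))"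
      unfolding Psi_recurrence by (simp add: algebra_simps)
    finally show ?thesis .
  qed
  then have "x\<^sup>2 * Psi_sum r N 2 x + x * Psi_sum r N 1 x - 4 * r\<^sup>2 * (1 + x\<^sup>2) * Psi_sum r N 0 x
      = 4 * (1 + x\<^sup>2) * (\<Sum>k=0..N. r powr (- 2 * real k) * (Psi (Suc k) x - r\<^sup>2 * Psi k x))"
    unfolding Psi_sum_def sum_distrib_left sum_subtractf[symmetric] sum.distrib[symmetric] by simp
  also have "\<dots> = 4 * (1 + x\<^sup>2) * (r powr (- 2 * real N) * Psi (Suc N) x) - 4 * r\<^sup>2 * ((1 + x\<^sup>2) * Psi 0 x)"
    unfolding sum_powr_telescope[OF assms, of "\<lambda>k. Psi k x" N] by (simp add: algebra_simps del: Psi.simps)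
  also have "(1 + x\<^sup>2) * Psi 0 x = x"
    using one_plus_square_pos[of x] by simp
  finally show ?thesis .
qed

definition g_deriv :: "nat \<Rightarrow> nat \<Rightarrow> nat \<Rightarrow> real \<Rightarrow> complex" where
  "g_deriv n N j x = varphi_deriv n j x - complex_of_real (Psi_sum (real n) N j x)"

lemma g_eq_g_deriv_0: "g n N = g_deriv n N 0"
  by (simp add: fun_eq_iff g_def g_deriv_def Psi_sum_def varphi_eq_varphi_deriv_0)

lemma g_deriv_has_vector_derivative: "(g_deriv n N j has_vector_derivative g_deriv n N (Suc j) x) (at x)"
  unfolding g_deriv_def[abs_def]
  by (intro has_vector_derivative_diff varphi_deriv_has_vector_derivative
      has_vector_derivative_of_real Psi_sum_has_real_derivative)

lemma g_zero: "1 \<le> n \<Longrightarrow> g n N 0 = 0"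
  by (simp add: g_def varphi_zero Psi_zero)

lemma g_bounded: "\<exists>M. \<forall>x\<ge>0. cmod (g n N x) \<le> M"
proof -
  obtain M where M: "\<And>x. 0 \<le> x \<Longrightarrow> \<bar>Psi_sum (real n) N 0 x\<bar> \<le> M"
    using Psi_sum_bounded by blast
  have "cmod (g n N x) \<le> real n * pi + M" if "0 \<le> x" for x
  proof -
    have "cmod (g n N x) \<le> cmod (varphi n x) + \<bar>Psi_sum (real n) N 0 x\<bar>"
      using norm_triangle_ineq4[of "varphi n x" "complex_of_real (Psi_sum (real n) N 0 x)"]
      by (simp add: g_eq_g_deriv_0 g_deriv_def flip: varphi_eq_varphi_deriv_0)
    then show ?thesis
      using norm_varphi_le[OF that, of n] M[OF that] by linarith
  qed
  then show ?thesis
    by blast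
qed

lemma g_ode:
  assumes "1 \<le> n"
  shows "complex_of_real (x\<^sup>2) * g_deriv n N 2 x + complex_of_real x * g_deriv n N 1 x
      - complex_of_real (4 * (real n)\<^sup>2 * (1 + x\<^sup>2)) * g_deriv n N 0 x
    = - complex_of_real (4 * (1 + x\<^sup>2) * (real n powr (- 2 * real N) * Psi (Suc N) x))"
proof -
  have "0 < real n"
    using assms by simp
  have "complex_of_real (x\<^sup>2) * g_deriv n N 2 x + complex_of_real x * g_deriv n N 1 x
      - complex_of_real (4 * (real n)\<^sup>2 * (1 + x\<^sup>2)) * g_deriv n N 0 x
    = (complex_of_real (x\<^sup>2) * varphi_deriv n 2 x + complex_of_real x * varphi_deriv n 1 x
        - complex_of_real (4 * (real n)\<^sup>2 * (1 + x\<^sup>2)) * varphi_deriv n 0 x)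
      - complex_of_real (x\<^sup>2 * Psi_sum (real n) N 2 x + x * Psi_sum (real n) N 1 x
        - 4 * (real n)\<^sup>2 * (1 + x\<^sup>2) * Psi_sum (real n) N 0 x)"
    by (simp add: g_deriv_def algebra_simps)
  also have "\<dots> = - complex_of_real (4 * (1 + x\<^sup>2) * (real n powr (- 2 * real N) * Psi (Suc N) x))"
    unfolding varphi_ode Psi_sum_ode[OF \<open>0 < real n\<close>] by simp
  finally show ?thesis .
qed

lemma norm_g_le:
  assumes n: "1 \<le> n"
    and A: "0 \<le> A" "\<And>x. 0 \<le> x \<Longrightarrow> \<bar>Psi (Suc N) x\<bar> \<le> A * (x / (1 + x\<^sup>2))"
    and x: "0 < x"
  shows "cmod (g n N x) \<le> 8 * A / 3 * (real n powr (- 2 * real N) / (real n)\<^sup>2) * Psi 0 x"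
proof -
  define q where "q = real n powr (- 2 * real N)"
  obtain M where M: "\<And>x. 0 \<le> x \<Longrightarrow> cmod (g n N x) \<le> M"
    using g_bounded by blast
  have "cmod (g_deriv n N 0 x) \<le> 2 * (4 * q * A) / (3 * (real n)\<^sup>2) * Psi 0 x"
  proof (rule bessel_comparison_complex[where M = M])
    show "1 \<le> (real n)\<^sup>2" "0 \<le> 4 * q * A"
      using n A(1) by (simp_all add: q_def)
    show "(g_deriv n N 0 has_vector_derivative g_deriv n N 1 y) (at y)"
      "(g_deriv n N 1 has_vector_derivative g_deriv n N 2 y) (at y)" for y
      using g_deriv_has_vector_derivative[of n N 0 y] g_deriv_has_vector_derivative[of n N 1 y]
      by (simp_all only: One_nat_def numeral_2_eq_2)
    show "g_deriv n N 0 0 = 0"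
      using g_zero[OF n] by (simp add: g_eq_g_deriv_0)
    show "cmod (g_deriv n N 0 y) \<le> M" if "0 < y" for y
      using M[of y] that by (simp add: g_eq_g_deriv_0)
    show "cmod (complex_of_real (y\<^sup>2) * g_deriv n N 2 y + complex_of_real y * g_deriv n N 1 y
        - complex_of_real (4 * (real n)\<^sup>2 * (1 + y\<^sup>2)) * g_deriv n N 0 y) \<le> 4 * q * A * y" if "0 < y" for y
    proof -
      have "cmod (complex_of_real (y\<^sup>2) * g_deriv n N 2 y + complex_of_real y * g_deriv n N 1 y
          - complex_of_real (4 * (real n)\<^sup>2 * (1 + y\<^sup>2)) * g_deriv n N 0 y) = 4 * (1 + y\<^sup>2) * q * \<bar>Psi (Suc N) y\<bar>"
        unfolding g_ode[OF n] norm_minus_cancel norm_of_real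
        using one_plus_square_pos[of y] by (simp add: abs_mult q_def)
      also have "\<dots> \<le> 4 * (1 + y\<^sup>2) * q * (A * (y / (1 + y\<^sup>2)))"
        using A(2)[of y] that one_plus_square_pos[of y] by (intro mult_left_mono) (auto simp: q_def)
      also have "\<dots> = 4 * q * A * y"
      proof -
        have "0 < w \<Longrightarrow> 4 * w * q * (A * (y / w)) = 4 * q * A * y" for w
          by (simp add: field_simps)
        then show ?thesis
          using one_plus_square_pos by blast
      qed
      finally show ?thesis .
    qed
  qed (use x in auto)
  then show ?thesis
    by (simp add: g_eq_g_deriv_0 q_def mult_ac)
qed

lemma powr_neg_div_square_le:
  fixes r :: real
  assumes "1 \<le> r" "e \<le> 2 * real N + 2"
  shows "r powr (- 2 * real N) / r\<^sup>2 \<le> 1 / r powr e"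
proof -
  have "r powr (- 2 * real N) / r\<^sup>2 = r powr (- 2 * real N) / r powr 2"
    using assms by (simp add: powr_numeral)
  also have "\<dots> = r powr (- 2 * real N - 2)"
    by (simp only: powr_diff)
  also have "\<dots> \<le> r powr (- e)"
    using assms by (intro powr_mono) auto
  finally show ?thesis
    by (simp add: powr_minus_divide)
qed

lemma Psi_0_le_powr:
  fixes x \<delta> :: real
  assumes x: "0 < x" and \<delta>: "0 \<le> \<delta>" "\<delta> \<le> 1"
  shows "Psi 0 x \<le> 2 * (x powr \<delta> / (1 + x))"
proof (cases "x \<le> 1")
  case True
  have "x = x powr 1"
    using x by simp
  also have "\<dots> \<le> x powr \<delta>"
    using x \<delta> True by (intro powr_mono') auto
  finally have "x \<le> x powr \<delta>" .
  have "Psi 0 x \<le> x"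
    using x by (simp add: divide_le_eq add_pos_nonneg mult_le_cancel_left1)
  also have "x \<le> 2 * (x / (1 + x))"
    using x True by (simp add: field_simps)
  also have "\<dots> \<le> 2 * (x powr \<delta> / (1 + x))"
    using \<open>x \<le> x powr \<delta>\<close> x by (simp add: divide_right_mono)
  finally show ?thesis .
next
  case False
  have "1 * x \<le> x * x"
    using False by (intro mult_right_mono) auto
  then have "x * (1 + x) \<le> 2 * (1 + x\<^sup>2)"
    by (simp add: power2_eq_square algebra_simps)
  then have "Psi 0 x \<le> 2 / (1 + x)"
    using x one_plus_square_pos[of x] by (simp add: field_simps)
  also have "\<dots> \<le> 2 * (x powr \<delta> / (1 + x))"
    using False \<delta> x ge_one_powr_ge_zero[of x \<delta>] by (simp add: divide_right_mono)
  finally show ?thesis .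
qed

theorem proposition3p3:
  fixes N :: nat and \<delta> :: real
  assumes "0 \<le> \<delta>" and "\<delta> < 1/3"
  shows "\<exists>C>0. \<forall>n::nat. \<forall>x::real. n \<ge> 1 \<longrightarrow> x > 0 \<longrightarrow>
           cmod (g n N x) \<le> C / real n powr (2 * real N + 2/3 - \<delta>) * (x powr \<delta> / (1 + x))"
proof -
  obtain A where A: "0 \<le> A" "\<And>x. 0 \<le> x \<Longrightarrow> \<bar>Psi (Suc N) x\<bar> \<le> A * (x / (1 + x\<^sup>2))"
    using Psi_bound by blast
  show ?thesis
  proof (intro exI[of _ "16 * (A + 1) / 3"] conjI allI impI)
    show "0 < 16 * (A + 1) / 3"
      using A(1) by simp
    fix n :: nat and x :: real
    assume "1 \<le> n" "0 < x"
    have "cmod (g n N x) \<le> 8 * A / 3 * (real n powr (- 2 * real N) / (real n)\<^sup>2) * Psi 0 x"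
      using \<open>1 \<le> n\<close> A \<open>0 < x\<close> by (rule norm_g_le)
    also have "\<dots> \<le> 8 * (A + 1) / 3 * (1 / real n powr (2 * real N + 2/3 - \<delta>)) * (2 * (x powr \<delta> / (1 + x)))"
      using assms A(1) \<open>1 \<le> n\<close> \<open>0 < x\<close>
      by (intro mult_mono powr_neg_div_square_le Psi_0_le_powr) auto
    also have "\<dots> = 16 * (A + 1) / 3 / real n powr (2 * real N + 2/3 - \<delta>) * (x powr \<delta> / (1 + x))"
      by simp
    finally show "cmod (g n N x) \<le> 16 * (A + 1) / 3 / real n powr (2 * real N + 2/3 - \<delta>) * (x powr \<delta> / (1 + x))" .
  qed
qed

end
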